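(* Let $G$ be a graph of minimum degree $\delta$ and order $n$, and let $w=(w_0,\dots,w_l)$ with $w_0$ a positive integer, $w_1,\dots,w_l$ nonnegative integers and $w_0\ge\cdots\ge w_l$. Then: (i) If there exists $i\in\{1,\dots,l-1\}$ with $i\delta\ge w_i$, then $\gamma_{(w_0,\dots,w_l)}(G)\le\gamma_{(w_0,\dots,w_i)}(G)$. (ii) If $l\ge i+1\ge w_0$, then $\gamma_{(w_0,\dots,w_i,0,\dots,0)}(G)\le (i+1)\gamma(G)$ (where the vector has length $l+1$). (iii) Let $k,i$ be positive integers with $l\ge ki$, and let $(w'_0,w'_1,\dots,w'_i)$ with $w'_0$ a positive integer and $w'_1,\dots,w'_i$ nonnegative integers. If $i\delta\ge w'_i$ and $w_{kj}=kw'_j$ for every $j\in\{0,1,\dots,i\}$, then $\gamma_{(w_0,\dots,w_l)}(G)\le k\,\gamma_{(w'_0,\dots,w'_i)}(G)$. (iv) Let $k$ and $\beta_1,\dots,\beta_k$ be positive integers. If $l\delta\ge k+w_l>k$ and $w_0+k\ge\beta_1\ge\cdots\ge\beta_k\ge w_1+k$, then $\gamma_{(w_0+k,\beta_1,\dots,\beta_k,w_1+k,\dots,w_l+k)}(G)\le\gamma_{(w_0,\dots,w_l)}(G)+k\bigl(n-\nu_{(w_0,\dots,w_l)}(G)\bigr)$. (v) If $l\delta\ge w_l\ge l\ge 2$, then $\gamma_{(w_0,\dots,w_l)}(G)\le l\,\gamma_{(w_0-l+1,\,w_l-l+1)}(G)$. (vi) If $\delta\ge1$, $w_0\le l-1$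 and $w_{l-1}\ge1$, then $\gamma_{(w_0,\dots,w_{l-2},1)}(G)\le\gamma_{(w_0,\dots,w_{l-1},0)}(G)$.
   Context: All graphs are finite and simple; $N(v)$ denotes the open neighbourhood. For a vector $w=(w_0,\dots,w_l)$ of nonnegative integers with $w_0\ge1$, a function $f:V(G)\to\{0,\dots,l\}$ is a $w$-dominating function if $\sum_{u\in N(v)}f(u)\ge w_i$ for every vertex $v$ with $f(v)=i$; we write $V_i=\{v:f(v)=i\}$. The weight is $\omega(f)=\sum_v f(v)$, and $\gamma_w(G)=\gamma_{(w_0,\dots,w_l)}(G)$ is the minimum weight of a $w$-dominating function on $G$; a $w$-dominating function of weight $\gamma_w(G)$ is a $\gamma_w(G)$-function. $\nu_{(w_0,\dots,w_l)}(G)=\max\{|V_0| : f(V_0,\dots,V_l) \text{ is a } \gamma_{(w_0,\dots,w_l)}(G)\text{-function}\}$. $\gamma(G)$ is the domination number. *)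

theory Defs
  imports Main "HOL-Library.Extended_Nat"
begin

definition simple_graph :: "'a set \<Rightarrow> ('a \<Rightarrow> 'a \<Rightarrow> bool) \<Rightarrow> bool" where
  "simple_graph V E \<longleftrightarrow> finite V \<and> (\<forall>u v. E u v \<longrightarrow> u \<in> V \<and> v \<in> V)
     \<and> (\<forall>u v. E u v \<longrightarrow> E v u) \<and> (\<forall>v. \<not> E v v)"

definition nbhd :: "'a set \<Rightarrow> ('a \<Rightarrow> 'a \<Rightarrow> bool) \<Rightarrow> 'a \<Rightarrow> 'a set" where
  "nbhd V E v = {u \<in> V. E v u}"

definition min_degree :: "'a set \<Rightarrow> ('a \<Rightarrow> 'a \<Rightarrow> bool) \<Rightarrow> nat" where
  "min_degree V E = Min ((\<lambda>v. card (nbhd V E v)) ` V)"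

definition is_wdom :: "'a set \<Rightarrow> ('a \<Rightarrow> 'a \<Rightarrow> bool) \<Rightarrow> nat list \<Rightarrow> ('a \<Rightarrow> nat) \<Rightarrow> bool" where
  "is_wdom V E w f \<longleftrightarrow>
     (\<forall>v\<in>V. f v < length w \<and> w ! (f v) \<le> (\<Sum>u\<in>nbhd V E v. f u))"

definition weight :: "'a set \<Rightarrow> ('a \<Rightarrow> nat) \<Rightarrow> nat" where
  "weight V f = (\<Sum>v\<in>V. f v)"

text \<open>gamma_w; it is \<infinity> when no w-dominating function exists.\<close>
definition gamma_w :: "'a set \<Rightarrow> ('a \<Rightarrow> 'a \<Rightarrow> bool) \<Rightarrow> nat list \<Rightarrow> enat" where
  "gamma_w V E w = Inf {enat (weight V f) | f. is_wdom V E w f}"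

definition nu_w :: "'a set \<Rightarrow> ('a \<Rightarrow> 'a \<Rightarrow> bool) \<Rightarrow> nat list \<Rightarrow> nat" where
  "nu_w V E w = Max {card {v \<in> V. f v = 0} | f.
      is_wdom V E w f \<and> enat (weight V f) = gamma_w V E w}"

definition dominating_set :: "'a set \<Rightarrow> ('a \<Rightarrow> 'a \<Rightarrow> bool) \<Rightarrow> 'a set \<Rightarrow> bool" where
  "dominating_set V E D \<longleftrightarrow> D \<subseteq> V \<and> (\<forall>v\<in>V - D. \<exists>u\<in>D. E v u)"

definition domination_number :: "'a set \<Rightarrow> ('a \<Rightarrow> 'a \<Rightarrow> bool) \<Rightarrow> nat" where
  "domination_number V E = Min {card D | D. dominating_set V E D}"

end

theory Submission
  imports Defs
begin

text \<open>
  Each part turns a dominating function for one weight vector into one for the other vector,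
  controlling the weight; as \<open>gamma_w\<close> is \<open>\<infinity>\<close> when no dominating function exists, this suffices.
  (i) Labels \<open>0..i\<close> mean the same for both vectors. (ii) Give label \<open>i+1\<close> to a minimum
  dominating set. (iii), (v) Multiply all labels by \<open>k\<close> (resp. \<open>l\<close>), which multiplies every
  neighbourhood sum. (iv) Take a minimum function with the most zeros and raise each nonzero label
  by \<open>k\<close>, skipping the labels \<open>1..k\<close>; since \<open>w\<^sub>l \<ge> 1\<close> every vertex has a neighbour with a
  nonzero label, so every neighbourhood sum grows by at least \<open>k\<close>. (vi) Lower label \<open>l\<close> to
  \<open>l-1\<close>, and for each vertex of label \<open>l\<close> whose neighbours all carry \<open>0\<close> raise one neighbour
  to \<open>1\<close>; at most as many vertices are raised as are lowered.
\<close>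

lemma simple_graph_finite: "simple_graph V E \<Longrightarrow> finite V"
  unfolding simple_graph_def by blast

lemma finite_nbhd: "simple_graph V E \<Longrightarrow> finite (nbhd V E v)"
  unfolding simple_graph_def nbhd_def by auto

lemma nbhd_nonempty_if_min_degree_pos:
  assumes "simple_graph V E" "1 \<le> min_degree V E" "v \<in> V"
  shows "nbhd V E v \<noteq> {}"
proof -
  have "min_degree V E \<le> card (nbhd V E v)"
    using assms unfolding min_degree_def simple_graph_def by (intro Min_le) auto
  with assms(2) show ?thesis by auto
qed

lemma le_sum_nbhd:
  "simple_graph V E \<Longrightarrow> x \<in> nbhd V E v \<Longrightarrow> (f x :: nat) \<le> (\<Sum>u\<in>nbhd V E v. f u)"
  by (rule member_le_sum) (simp_all add: finite_nbhd)

lemma gamma_w_le_weight: "is_wdom V E w f \<Longrightarrow> gamma_w V E w \<le> enat (weight V f)"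
  unfolding gamma_w_def by (rule Inf_lower) blast

lemma gamma_w_attained:
  assumes "is_wdom V E w f"
  obtains g where "is_wdom V E w g" "gamma_w V E w = enat (weight V g)"
proof -
  have "gamma_w V E w \<in> {enat (weight V f) |f. is_wdom V E w f}"
    unfolding gamma_w_def by (rule wellorder_InfI) (use assms in blast)
  with that show ?thesis by blast
qed

lemma gamma_w_eq_infinity: "\<nexists>f. is_wdom V E w f \<Longrightarrow> gamma_w V E w = \<infinity>"
  unfolding gamma_w_def by (simp add: Inf_enat_def)

lemma gamma_w_le_mult_if_transfer:
  assumes "c > 0"
    and transfer: "\<And>f. is_wdom V E w' f \<Longrightarrow> \<exists>g. is_wdom V E w g \<and> weight V g \<le> c * weight V f"
  shows "gamma_w V E w \<le> enat c * gamma_w V E w'"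
proof (cases "\<exists>f. is_wdom V E w' f")
  case True
  then obtain f where f: "is_wdom V E w' f" "gamma_w V E w' = enat (weight V f)"
    by (metis gamma_w_attained)
  obtain g where g: "is_wdom V E w g" "weight V g \<le> c * weight V f"
    using transfer[OF f(1)] by blast
  have "gamma_w V E w \<le> enat (weight V g)" by (rule gamma_w_le_weight[OF g(1)])
  also have "\<dots> \<le> enat (c * weight V f)" using g(2) by simp
  finally show ?thesis by (simp add: f(2))
next
  case False
  with assms(1) show ?thesis by (simp add: gamma_w_eq_infinity imult_is_infinity)
qed

corollary gamma_w_le_if_transfer:
  assumes "\<And>f. is_wdom V E w' f \<Longrightarrow> \<exists>g. is_wdom V E w g \<and> weight V g \<le> weight V f"
  shows "gamma_w V E w \<le> gamma_w V E w'"
  using gamma_w_le_mult_if_transfer[of 1 V E w' w] assms by (metis mult_1 one_enat_def zero_less_one)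

lemma is_wdom_scale:
  assumes f: "is_wdom V E w' f"
    and w: "\<forall>j<length w'. k * j < length w \<and> w ! (k * j) \<le> k * w' ! j"
  shows "is_wdom V E w (\<lambda>v. k * f v)"
  unfolding is_wdom_def
proof
  fix v assume "v \<in> V"
  with f have "f v < length w'" "w' ! f v \<le> (\<Sum>u\<in>nbhd V E v. f u)"
    unfolding is_wdom_def by auto
  with w show "k * f v < length w \<and> w ! (k * f v) \<le> (\<Sum>u\<in>nbhd V E v. k * f u)"
    by (auto simp flip: sum_distrib_left intro: le_trans)
qed

lemma gamma_w_le_scale:
  assumes "k > 0" and "\<forall>j<length w'. k * j < length w \<and> w ! (k * j) \<le> k * w' ! j"
  shows "gamma_w V E w \<le> enat k * gamma_w V E w'"
  using assms(1)
proof (rule gamma_w_le_mult_if_transfer)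
  fix f assume "is_wdom V E w' f"
  then have "is_wdom V E w (\<lambda>v. k * f v)" using assms(2) by (rule is_wdom_scale)
  moreover have "weight V (\<lambda>v. k * f v) = k * weight V f"
    by (simp add: weight_def sum_distrib_left)
  ultimately show "\<exists>g. is_wdom V E w g \<and> weight V g \<le> k * weight V f" by auto
qed

corollary gamma_w_antimono:
  assumes "\<forall>j<length w'. j < length w \<and> w ! j \<le> w' ! j"
  shows "gamma_w V E w \<le> gamma_w V E w'"
  using gamma_w_le_scale[of 1 w' w V E] assms by (metis mult_1 one_enat_def zero_less_one)

lemma domination_number_attained:
  assumes "finite V"
  obtains D where "dominating_set V E D" "card D = domination_number V E"
proof -
  have "{card D |D. dominating_set V E D} \<subseteq> {..card V}"
    using assms by (auto simp: dominating_set_def intro: card_mono)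
  moreover have "dominating_set V E V" by (simp add: dominating_set_def)
  ultimately have "domination_number V E \<in> {card D |D. dominating_set V E D}"
    unfolding domination_number_def by (intro Min_in) (auto intro: finite_subset)
  with that show ?thesis by force
qed

lemma is_wdom_dominating_set:
  assumes G: "simple_graph V E" and D: "dominating_set V E D"
    and m: "m < length w" "w ! m = 0" "w ! 0 \<le> m"
  shows "is_wdom V E w (\<lambda>v. if v \<in> D then m else 0)" (is "is_wdom V E w ?g")
  unfolding is_wdom_def
proof
  fix v assume v: "v \<in> V"
  show "?g v < length w \<and> w ! ?g v \<le> (\<Sum>u\<in>nbhd V E v. ?g u)"
  proof (cases "v \<in> D")
    case False
    then obtain u where "u \<in> D" "u \<in> nbhd V E v"
      using D v unfolding dominating_set_def nbhd_def by blast
    then have "m \<le> (\<Sum>u\<in>nbhd V E v. ?g u)" using le_sum_nbhd[OF G, of u v ?g] by simp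
    with False m show ?thesis by auto
  qed (use m in simp)
qed

lemma gamma_w_le_domination_number:
  assumes G: "simple_graph V E" and m: "m < length w" "w ! m = 0" "w ! 0 \<le> m"
  shows "gamma_w V E w \<le> enat (m * domination_number V E)"
proof -
  obtain D where D: "dominating_set V E D" "card D = domination_number V E"
    using domination_number_attained[OF simple_graph_finite[OF G]] by blast
  have "weight V (\<lambda>v. if v \<in> D then m else 0) = m * card D"
    using D(1) simple_graph_finite[OF G]
    by (simp add: weight_def dominating_set_def sum.If_cases Int_absorb1)
  with gamma_w_le_weight[OF is_wdom_dominating_set[OF G D(1) m]] D(2) show ?thesis
    by simp
qed

lemma sum_shift_nonzero:
  assumes "finite A"
  shows "(\<Sum>u\<in>A. if f u = 0 then 0 else f u + k)
    = (\<Sum>u\<in>A. f u) + k * card {u\<in>A. f u \<noteq> (0::nat)}"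
proof -
  have "(\<Sum>u\<in>A. if f u = 0 then 0 else f u + k) = (\<Sum>u\<in>A. f u + k * of_bool (f u \<noteq> 0))"
    by (rule sum.cong) auto
  also have "\<dots> = (\<Sum>u\<in>A. f u) + k * card {u\<in>A. f u \<noteq> 0}"
    using assms by (simp add: sum.distrib flip: sum_distrib_left) (metis Collect_conj_eq Collect_mem_eq)
  finally show ?thesis .
qed

lemma is_wdom_shift:
  assumes G: "simple_graph V E" and f: "is_wdom V E w f"
    and pos: "\<forall>j<length w. 1 \<le> w ! j" and \<beta>: "length \<beta> = k"
  shows "is_wdom V E ((w ! 0 + k) # \<beta> @ map (\<lambda>x. x + k) (drop 1 w))
           (\<lambda>v. if f v = 0 then 0 else f v + k)"
    (is "is_wdom V E ?W ?g")
  unfolding is_wdom_def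
proof
  fix v assume v: "v \<in> V"
  let ?N = "nbhd V E v"
  have fv: "f v < length w" "w ! f v \<le> (\<Sum>u\<in>?N. f u)"
    using f v unfolding is_wdom_def by auto
  then have "(\<Sum>u\<in>?N. f u) \<noteq> 0" using pos by fastforce
  then have "{u\<in>?N. f u \<noteq> 0} \<noteq> {}" by (metis (mono_tags, lifting) empty_Collect_eq sum.neutral)
  then have "0 < card {u\<in>?N. f u \<noteq> 0}" using finite_nbhd[OF G] by (simp add: card_gt_0_iff)
  then have "k \<le> k * card {u\<in>?N. f u \<noteq> 0}" by simp
  then have "w ! f v + k \<le> (\<Sum>u\<in>?N. ?g u)"
    using fv(2) sum_shift_nonzero[OF finite_nbhd[OF G], of f k v] by linarith
  moreover have "?g v < length ?W \<and> ?W ! ?g v = w ! f v + k"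
  proof (cases "f v")
    case (Suc j)
    with fv(1) \<beta> show ?thesis by (cases w) (auto simp: nth_append)
  qed simp
  ultimately show "?g v < length ?W \<and> ?W ! ?g v \<le> (\<Sum>u\<in>?N. ?g u)" by simp
qed

lemma nu_w_attained:
  assumes "finite V" "is_wdom V E w f"
  obtains g where "is_wdom V E w g" "enat (weight V g) = gamma_w V E w"
    "card {v \<in> V. g v = 0} = nu_w V E w"
proof -
  let ?N = "{card {v \<in> V. g v = 0} |g. is_wdom V E w g \<and> enat (weight V g) = gamma_w V E w}"
  have "?N \<subseteq> {..card V}" using assms(1) by (auto intro: card_mono)
  moreover obtain g0 where "is_wdom V E w g0" "gamma_w V E w = enat (weight V g0)"
    using gamma_w_attained[OF assms(2)] by blast
  then have "?N \<noteq> {}" by force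
  ultimately have "nu_w V E w \<in> ?N"
    unfolding nu_w_def by (intro Max_in) (auto intro: finite_subset)
  with that show ?thesis by force
qed

lemma gamma_w_shift_le:
  assumes G: "simple_graph V E" and pos: "\<forall>j<length w. 1 \<le> w ! j" and \<beta>: "length \<beta> = k"
  shows "gamma_w V E ((w ! 0 + k) # \<beta> @ map (\<lambda>x. x + k) (drop 1 w))
           \<le> gamma_w V E w + enat (k * (card V - nu_w V E w))"
proof (cases "\<exists>f. is_wdom V E w f")
  case True
  have finV: "finite V" using simple_graph_finite[OF G] .
  with True obtain f where f: "is_wdom V E w f" "enat (weight V f) = gamma_w V E w"
    "card {v \<in> V. f v = 0} = nu_w V E w"
    by (metis nu_w_attained)
  have "{v \<in> V. f v \<noteq> 0} = V - {v \<in> V. f v = 0}" by auto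
  then have "card {v \<in> V. f v \<noteq> 0} = card V - nu_w V E w"
    using finV f(3) by (simp add: card_Diff_subset)
  then have "weight V (\<lambda>v. if f v = 0 then 0 else f v + k) = weight V f + k * (card V - nu_w V E w)"
    unfolding weight_def by (simp add: sum_shift_nonzero[OF finV])
  with gamma_w_le_weight[OF is_wdom_shift[OF G f(1) pos \<beta>]] show ?thesis
    by (simp flip: f(2))
qed (simp add: gamma_w_eq_infinity)

lemma le_mult_diff_add_one:
  fixes x m :: nat
  assumes "1 \<le> m" "m \<le> x"
  shows "x \<le> m * (x - m + 1)"
proof -
  obtain d where "x = m + d" using le_Suc_ex[OF assms(2)] by blast
  moreover have "d \<le> m * d" using assms(1) by simp
  ultimately show ?thesis by (simp add: algebra_simps)
qed

lemma gamma_w_le_mult_two_labels: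
  assumes "1 \<le> m" "m < length w" "m \<le> w ! m" "w ! m \<le> w ! 0"
  shows "gamma_w V E w \<le> enat m * gamma_w V E [w ! 0 - m + 1, w ! m - m + 1]"
proof (rule gamma_w_le_scale)
  show "\<forall>j<length [w ! 0 - m + 1, w ! m - m + 1].
      m * j < length w \<and> w ! (m * j) \<le> m * [w ! 0 - m + 1, w ! m - m + 1] ! j"
    using assms le_mult_diff_add_one[of m "w ! 0"] le_mult_diff_add_one[of m "w ! m"]
    by (auto simp: All_less_Suc)
qed (use assms in simp)

lemma zero_neighbour_cover_exists:
  assumes G: "simple_graph V E" and deg: "\<forall>v\<in>V. nbhd V E v \<noteq> {}"
  obtains T where "\<forall>t\<in>T. f t = 0 \<and> (\<exists>s\<in>nbhd V E t. f s = m)"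
    and "\<forall>v\<in>V. f v = m \<longrightarrow> (\<exists>x\<in>nbhd V E v. f x \<noteq> 0 \<or> x \<in> T)"
    and "T \<subseteq> V" "card T \<le> card {v\<in>V. f v = m}"
proof -
  define S where "S = {v\<in>V. f v = m \<and> (\<forall>x\<in>nbhd V E v. f x = 0)}"
  define c where "c v = (SOME x. x \<in> nbhd V E v)" for v
  have c: "c s \<in> nbhd V E s" if "s \<in> S" for s
    using that deg unfolding S_def c_def by (auto simp: some_in_eq)
  have sym: "s \<in> nbhd V E x" if "x \<in> nbhd V E s" "s \<in> V" for s x
    using G that unfolding simple_graph_def nbhd_def by blast
  show ?thesis
  proof (rule that[of "c ` S"])
    show "\<forall>t\<in>c ` S. f t = 0 \<and> (\<exists>s\<in>nbhd V E t. f s = m)"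
      using c sym unfolding S_def by fastforce
    show "\<forall>v\<in>V. f v = m \<longrightarrow> (\<exists>x\<in>nbhd V E v. f x \<noteq> 0 \<or> x \<in> c ` S)"
      using c unfolding S_def by blast
    show "c ` S \<subseteq> V" using c unfolding nbhd_def by blast
    have "finite S" using simple_graph_finite[OF G] unfolding S_def by simp
    then have "card (c ` S) \<le> card S" by (rule card_image_le)
    also have "\<dots> \<le> card {v\<in>V. f v = m}"
      using simple_graph_finite[OF G] unfolding S_def by (intro card_mono) auto
    finally show "card (c ` S) \<le> card {v\<in>V. f v = m}" .
  qed
qed

lemma is_wdom_lower_top_label:
  assumes G: "simple_graph V E" and f: "is_wdom V E (u @ [0]) f"
    and m: "length u = m" "2 \<le> m"
    and u_le: "\<forall>j<m. u ! j \<le> m - 1" and last: "1 \<le> u ! (m - 1)"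
    and T: "\<forall>t\<in>T. f t = 0 \<and> (\<exists>s\<in>nbhd V E t. f s = m)"
    and cover: "\<forall>v\<in>V. f v = m \<longrightarrow> (\<exists>x\<in>nbhd V E v. f x \<noteq> 0 \<or> x \<in> T)"
  shows "is_wdom V E (butlast u @ [1]) (\<lambda>v. if f v = m then m - 1 else if v \<in> T then 1 else f v)"
    (is "is_wdom V E ?A ?g")
  unfolding is_wdom_def
proof
  fix v assume v: "v \<in> V"
  let ?N = "nbhd V E v"
  have lenA: "length ?A = m" using m by simp
  have A_le_u: "?A ! j \<le> u ! j" if "j < m" for j
    using that m last by (cases "j = m - 1") (auto simp: nth_append nth_butlast)
  have fv: "f v \<le> m" "(u @ [0]) ! f v \<le> (\<Sum>x\<in>?N. f x)"
    using f v m unfolding is_wdom_def by auto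
  show "?g v < length ?A \<and> ?A ! ?g v \<le> (\<Sum>x\<in>?N. ?g x)"
  proof (cases "f v = m")
    case True
    then obtain x where x: "x \<in> ?N" "f x \<noteq> 0 \<or> x \<in> T" using cover v by blast
    have "?A ! (m - 1) = 1" using m by (simp add: nth_append)
    moreover have "1 \<le> ?g x" using x m by auto
    ultimately show ?thesis using True m le_sum_nbhd[OF G x(1), of ?g] by simp
  next
    case not_top: False
    show ?thesis
    proof (cases "\<exists>s\<in>?N. f s = m")
      case True
      then obtain s where "s \<in> ?N" "f s = m" by blast
      have gv: "?g v < m" using not_top fv(1) m by auto
      have "?A ! ?g v \<le> u ! ?g v" by (rule A_le_u[OF gv])
      also have "\<dots> \<le> m - 1" using u_le gv by blast
      also have "\<dots> \<le> (\<Sum>x\<in>?N. ?g x)"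
        using le_sum_nbhd[OF G \<open>s \<in> ?N\<close>, of ?g] \<open>f s = m\<close> by simp
      finally show ?thesis using gv lenA by simp
    next
      case False
      have "v \<notin> T" using T False by blast
      then have gv: "?g v = f v" using not_top by simp
      have "f v < m" using not_top fv(1) by simp
      then have "?A ! f v \<le> (u @ [0]) ! f v" using A_le_u m by (simp add: nth_append)
      also have "\<dots> \<le> (\<Sum>x\<in>?N. f x)" by (fact fv(2))
      also have "\<dots> \<le> (\<Sum>x\<in>?N. ?g x)" using False T by (intro sum_mono) auto
      finally show ?thesis using gv \<open>f v < m\<close> lenA by simp
    qed
  qed
qed

lemma weight_lower_top_label:
  assumes "finite V" "T \<subseteq> V" "\<forall>t\<in>T. f t = 0" "card T \<le> card {v\<in>V. f v = m}" "1 \<le> m"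
  shows "weight V (\<lambda>v. if f v = m then m - 1 else if v \<in> T then 1 else f v) \<le> weight V f"
proof -
  let ?g = "\<lambda>v. if f v = m then m - 1 else if v \<in> T then 1 else f v"
  have "(\<Sum>v\<in>V. ?g v + of_bool (f v = m)) = (\<Sum>v\<in>V. f v + of_bool (v \<in> T))"
    using assms(3,5) by (intro sum.cong) auto
  then have "weight V ?g + card {v\<in>V. f v = m} = weight V f + card T"
    using assms(1) by (simp add: weight_def sum.distrib Collect_conj_eq Int_absorb1[OF assms(2)])
  with assms(4) show ?thesis by linarith
qed

lemma gamma_w_lower_top_label:
  assumes G: "simple_graph V E" and deg: "\<forall>v\<in>V. nbhd V E v \<noteq> {}"
    and m: "2 \<le> length u" and u_le: "\<forall>j<length u. u ! j \<le> length u - 1"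
    and last: "1 \<le> u ! (length u - 1)"
  shows "gamma_w V E (butlast u @ [1]) \<le> gamma_w V E (u @ [0])"
proof (rule gamma_w_le_if_transfer)
  fix f assume f: "is_wdom V E (u @ [0]) f"
  obtain T where T: "\<forall>t\<in>T. f t = 0 \<and> (\<exists>s\<in>nbhd V E t. f s = length u)"
    and cover: "\<forall>v\<in>V. f v = length u \<longrightarrow> (\<exists>x\<in>nbhd V E v. f x \<noteq> 0 \<or> x \<in> T)"
    and "T \<subseteq> V" "card T \<le> card {v\<in>V. f v = length u}"
    using zero_neighbour_cover_exists[OF G deg] by blast
  moreover have "1 \<le> length u" using m by simp
  ultimately show "\<exists>g. is_wdom V E (butlast u @ [1]) g \<and> weight V g \<le> weight V f"
    using is_wdom_lower_top_label[OF G f refl m u_le last T cover]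
      weight_lower_top_label[OF simple_graph_finite[OF G]]
    by blast
qed

theorem theorem13:
  fixes V :: "'a set" and E :: "'a \<Rightarrow> 'a \<Rightarrow> bool"
    and w :: "nat list" and l n \<delta> :: nat
  assumes G: "simple_graph V E" and nonempty: "V \<noteq> {}"
    and n_def: "n = card V" and delta_def: "\<delta> = min_degree V E"
    and len: "length w = l + 1" and w0: "w ! 0 \<ge> 1"
    and mono: "\<forall>j. j < l \<longrightarrow> w ! (j + 1) \<le> w ! j"
  shows
    "(\<forall>i\<in>{1..l-1}. i * \<delta> \<ge> w ! i \<longrightarrow>
        gamma_w V E w \<le> gamma_w V E (take (i + 1) w))
     \<and>
     (\<forall>i. l \<ge> i + 1 \<and> i + 1 \<ge> w ! 0 \<longrightarrow>
        gamma_w V E (take (i + 1) w @ replicate (l - i) 0)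
          \<le> enat ((i + 1) * domination_number V E))
     \<and>
     (\<forall>k i w'. k > 0 \<and> i > 0 \<and> l \<ge> k * i \<and> length w' = i + 1 \<and> w' ! 0 \<ge> 1
        \<and> i * \<delta> \<ge> w' ! i \<and> (\<forall>j\<le>i. w ! (k * j) = k * w' ! j) \<longrightarrow>
        gamma_w V E w \<le> enat k * gamma_w V E w')
     \<and>
     (\<forall>k \<beta>. k > 0 \<and> length \<beta> = k \<and> (\<forall>b\<in>set \<beta>. b > 0)
        \<and> l * \<delta> \<ge> k + w ! l \<and> k + w ! l > k
        \<and> w ! 0 + k \<ge> \<beta> ! 0 \<and> sorted_wrt (\<ge>) \<beta> \<and> \<beta> ! (k - 1) \<ge> w ! 1 + k \<longrightarrow>
        gamma_w V E ((w ! 0 + k) # \<beta> @ map (\<lambda>x. x + k) (drop 1 w))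
          \<le> gamma_w V E w + enat (k * (n - nu_w V E w)))
     \<and>
     (l * \<delta> \<ge> w ! l \<and> w ! l \<ge> l \<and> l \<ge> 2 \<longrightarrow>
        gamma_w V E w \<le> enat l * gamma_w V E [w ! 0 - l + 1, w ! l - l + 1])
     \<and>
     (\<delta> \<ge> 1 \<and> w ! 0 \<le> l - 1 \<and> w ! (l - 1) \<ge> 1 \<longrightarrow>
        gamma_w V E (take (l - 1) w @ [1]) \<le> gamma_w V E (take l w @ [0]))"
proof -
  have w_antimono: "w ! j \<le> w ! i" if "i \<le> j" "j \<le> l" for i j
    by (rule lift_Suc_antimono_le_ivl[of "{..<l}" "(!) w"]) (use mono that in auto)
  have nbhd_nonempty: "\<forall>v\<in>V. nbhd V E v \<noteq> {}" if "1 \<le> \<delta>"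
    using nbhd_nonempty_if_min_degree_pos[OF G] that delta_def by blast
  show ?thesis
  proof (intro conjI ballI allI impI; (elim conjE)?)
    show "gamma_w V E w \<le> gamma_w V E (take (i + 1) w)" if "i \<in> {1..l-1}" for i
      using that len by (intro gamma_w_antimono) auto
    show "gamma_w V E (take (i + 1) w @ replicate (l - i) 0) \<le> enat ((i + 1) * domination_number V E)"
      if "i + 1 \<le> l" "w ! 0 \<le> i + 1" for i
      using that len by (intro gamma_w_le_domination_number[OF G]) (auto simp: nth_append)
    show "gamma_w V E w \<le> enat k * gamma_w V E w'"
      if "0 < k" "k * i \<le> l" "length w' = i + 1" "\<forall>j\<le>i. w ! (k * j) = k * w' ! j" for k i w'
    proof (rule gamma_w_le_scale[OF that(1)])
      have "k * j < length w" if "j \<le> i" for j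
        using mult_le_mono2[OF that, of k] \<open>k * i \<le> l\<close> len by linarith
      then show "\<forall>j<length w'. k * j < length w \<and> w ! (k * j) \<le> k * w' ! j"
        using that(3,4) by auto
    qed
    show "gamma_w V E ((w ! 0 + k) # \<beta> @ map (\<lambda>x. x + k) (drop 1 w))
        \<le> gamma_w V E w + enat (k * (n - nu_w V E w))"
      if "length \<beta> = k" "k < k + w ! l" for k \<beta>
    proof -
      have "\<forall>j<length w. 1 \<le> w ! j"
        using w_antimono[of _ l] that(2) len by (fastforce simp: less_Suc_eq_le)
      then show ?thesis using gamma_w_shift_le[OF G _ that(1)] n_def by simp
    qed
    show "gamma_w V E w \<le> enat l * gamma_w V E [w ! 0 - l + 1, w ! l - l + 1]"
      if "l \<le> w ! l" "2 \<le> l"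
      using that len w_antimono[of 0 l] by (intro gamma_w_le_mult_two_labels) auto
    show "gamma_w V E (take (l - 1) w @ [1]) \<le> gamma_w V E (take l w @ [0])"
      if "1 \<le> \<delta>" "w ! 0 \<le> l - 1" "1 \<le> w ! (l - 1)"
    proof -
      have "2 \<le> l" using that(2) w0 by linarith
      moreover have "\<forall>j<l. w ! j \<le> l - 1"
        using w_antimono[of 0] that(2) by (meson le0 le_trans less_imp_le)
      ultimately show ?thesis
        using gamma_w_lower_top_label[OF G nbhd_nonempty[OF that(1)], of "take l w"] that(3) len
        by (simp add: butlast_take)
    qed
  qed
qed

end
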